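(* Let $S$ be a solid and let $x\in S^*$ with $x=a+e(x)$ for some $a\in S$ with $e(a)=0$. Suppose $b\in S$ satisfies $e(b)=0$ and $u(x)=1+b+e(u(x))$. Then $|b|\le e(u(x))$.
   Context: A solid is a set $S$ with two binary operations $+$ and $\cdot$ (written $xy$) and a binary relation $\le$ satisfying the following axioms (all variables range over $S$). (A1) $+$ is associative and commutative. (A2) For each $x$ there is $e$ with $x+e=x$ such that $e+f=e$ for every $f$ with $x+f=x$; this $e$ is unique and is denoted $e(x)$ (the magnitude of $x$). An element $x$ with $x=e(x)$ is called a magnitude. (A3) For each $x$ there is $s$ with $x+s=e(x)$ and $e(s)=e(x)$; it is unique and denoted $-x$; write $x-y$ for $x+(-y)$. (A4) $e(x+y)=e(x)$ or $e(x+y)=e(y)$. (M1) $\cdot$ is associative and commutative. (M2) For each $x\neq e(x)$ there is $u$ with $xu=x$ such that $uv=u$ for every $v$ with $xv=x$; it is unique and denoted $u(x)$. (M3) For each $x\ne e(x)$ there is $d$ with $xd=u(x)$ and $u(d)=u(x)$; it is unique and denoted $x^{-1}$; write $y/x$ for $yx^{-1}$. (M4) If $x\neq e(x)$ and $y\ne e(y)$ then $u(xy)=u(x)$ or $u(xy)=u(y)$. (O1) $\le$ is a total order (reflexive, antisymmetric, transitive, total); $x<y$ means $x\le y$ and $x\ne y$. (O2) $x\le y\Rightarrow x+z\le y+z$. (O3) $y+e(x)=e(x)\Rightarrow (y\le e(x)$ and $-y\le e(x))$. (O4) $(e(x)<x$ and $y\le z)\Rightarrow xy\le xz$. (O5)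 $e(y)\le y\le z\Rightarrow e(x)y\le e(x)z$. (AM1) For all $x,y$ there is $z$ with $e(x)y=e(z)$. (AM2) $e(xy)=e(x)y+e(y)x$. (AM3) If $x\ne e(x)$ then $e(u(x))=e(x)/x$. (AM4) (distributivity axiom) $xy+xz=x(y+z)+e(x)y+e(x)z$. (AM5) $-(xy)=(-x)y$. (E1) There is $m$ with $m+x=x$ for all $x$; it is unique, called zero and denoted $0$. (E2) There is $u$ with $ux=x$ for all $x$; it is unique, called one and denoted $1$. (E3) There is $M$ with $e(x)+M=M$ for all $x$. (E4) There is $x$ with $e(x)\ne 0$ and $e(x)\ne M$. (E5) For every $x$ there is $a$ with $x=a+e(x)$ and $e(a)=0$. (E6) If $x,y$ are magnitudes with $x<y$, there is $z$ with $z\ne e(z)$ and $x<z<y$. Further notation: $S^*=\{x\in S: x\ne e(x)\}$ (zeroless elements). $x$ is positive if $e(x)\le x$ and negative if $x<e(x)$; $|x|=x$ if $x$ is positive and $|x|=-x$ if $x$ is negative. $x$ is precise if $e(x)=0$. The relative uncertainty $R(x)$ is $e(u(x))$ if $x\ne e(x)$, and $M$ (from (E3)) if $x=e(x)$. *)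

theory Defs
  imports Main
begin

text \<open>A solid is modelled on a type 'a (the carrier S = UNIV) with operations
  add, mul and relation le.  Derived notions are defined via THE.\<close>

definition mag :: "('a \<Rightarrow> 'a \<Rightarrow> 'a) \<Rightarrow> 'a \<Rightarrow> 'a" where
  "mag add x = (THE e. add x e = x \<and> (\<forall>f. add x f = x \<longrightarrow> add e f = e))"

definition neg_s :: "('a \<Rightarrow> 'a \<Rightarrow> 'a) \<Rightarrow> 'a \<Rightarrow> 'a" where
  "neg_s add x = (THE s. add x s = mag add x \<and> mag add s = mag add x)"

definition unit_s :: "('a \<Rightarrow> 'a \<Rightarrow> 'a) \<Rightarrow> 'a \<Rightarrow> 'a" where
  "unit_s mul x = (THE u. mul x u = x \<and> (\<forall>v. mul x v = x \<longrightarrow> mul u v = u))"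

definition inv_s :: "('a \<Rightarrow> 'a \<Rightarrow> 'a) \<Rightarrow> ('a \<Rightarrow> 'a \<Rightarrow> 'a) \<Rightarrow> 'a \<Rightarrow> 'a" where
  "inv_s add mul x = (THE d. mul x d = unit_s mul x \<and> d \<noteq> mag add d
                              \<and> unit_s mul d = unit_s mul x)"

definition zero_s :: "('a \<Rightarrow> 'a \<Rightarrow> 'a) \<Rightarrow> 'a" where
  "zero_s add = (THE m. \<forall>x. add m x = x)"

definition one_s :: "('a \<Rightarrow> 'a \<Rightarrow> 'a) \<Rightarrow> 'a" where
  "one_s mul = (THE u. \<forall>x. mul u x = x)"

definition abs_s :: "('a \<Rightarrow> 'a \<Rightarrow> 'a) \<Rightarrow> ('a \<Rightarrow> 'a \<Rightarrow> bool) \<Rightarrow> 'a \<Rightarrow> 'a" where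
  "abs_s add le x = (if le (mag add x) x then x else neg_s add x)"

definition solid :: "('a \<Rightarrow> 'a \<Rightarrow> 'a) \<Rightarrow> ('a \<Rightarrow> 'a \<Rightarrow> 'a) \<Rightarrow> ('a \<Rightarrow> 'a \<Rightarrow> bool) \<Rightarrow> bool" where
  "solid add mul le \<longleftrightarrow>
   \<comment> \<open>A1\<close>
   (\<forall>x y z. add (add x y) z = add x (add y z)) \<and> (\<forall>x y. add x y = add y x) \<and>
   \<comment> \<open>A2\<close>
   (\<forall>x. \<exists>!e. add x e = x \<and> (\<forall>f. add x f = x \<longrightarrow> add e f = e)) \<and>
   \<comment> \<open>A3\<close>
   (\<forall>x. \<exists>!s. add x s = mag add x \<and> mag add s = mag add x) \<and>
   \<comment> \<open>A4\<close>
   (\<forall>x y. mag add (add x y) = mag add x \<or> mag add (add x y) = mag add y) \<and>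
   \<comment> \<open>M1\<close>
   (\<forall>x y z. mul (mul x y) z = mul x (mul y z)) \<and> (\<forall>x y. mul x y = mul y x) \<and>
   \<comment> \<open>M2\<close>
   (\<forall>x. x \<noteq> mag add x \<longrightarrow> (\<exists>!u. mul x u = x \<and> (\<forall>v. mul x v = x \<longrightarrow> mul u v = u))) \<and>
   \<comment> \<open>M3\<close>
   (\<forall>x. x \<noteq> mag add x \<longrightarrow>
        (\<exists>!d. mul x d = unit_s mul x \<and> d \<noteq> mag add d \<and> unit_s mul d = unit_s mul x)) \<and>
   \<comment> \<open>M4\<close>
   (\<forall>x y. x \<noteq> mag add x \<and> y \<noteq> mag add y \<longrightarrow>
        unit_s mul (mul x y) = unit_s mul x \<or> unit_s mul (mul x y) = unit_s mul y) \<and>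
   \<comment> \<open>O1\<close>
   (\<forall>x. le x x) \<and> (\<forall>x y. le x y \<and> le y x \<longrightarrow> x = y) \<and>
   (\<forall>x y z. le x y \<and> le y z \<longrightarrow> le x z) \<and> (\<forall>x y. le x y \<or> le y x) \<and>
   \<comment> \<open>O2\<close>
   (\<forall>x y z. le x y \<longrightarrow> le (add x z) (add y z)) \<and>
   \<comment> \<open>O3\<close>
   (\<forall>x y. add y (mag add x) = mag add x \<longrightarrow>
        le y (mag add x) \<and> le (neg_s add y) (mag add x)) \<and>
   \<comment> \<open>O4\<close>
   (\<forall>x y z. (le (mag add x) x \<and> mag add x \<noteq> x) \<and> le y z \<longrightarrow> le (mul x y) (mul x z)) \<and>
   \<comment> \<open>O5\<close>
   (\<forall>x y z. le (mag add y) y \<and> le y z \<longrightarrow> le (mul (mag add x) y) (mul (mag add x) z)) \<and>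
   \<comment> \<open>AM1\<close>
   (\<forall>x y. \<exists>z. mul (mag add x) y = mag add z) \<and>
   \<comment> \<open>AM2\<close>
   (\<forall>x y. mag add (mul x y) = add (mul (mag add x) y) (mul (mag add y) x)) \<and>
   \<comment> \<open>AM3\<close>
   (\<forall>x. x \<noteq> mag add x \<longrightarrow> mag add (unit_s mul x) = mul (mag add x) (inv_s add mul x)) \<and>
   \<comment> \<open>AM4\<close>
   (\<forall>x y z. add (mul x y) (mul x z) =
        add (add (mul x (add y z)) (mul (mag add x) y)) (mul (mag add x) z)) \<and>
   \<comment> \<open>AM5\<close>
   (\<forall>x y. neg_s add (mul x y) = mul (neg_s add x) y) \<and>
   \<comment> \<open>E1\<close>
   (\<exists>!m. \<forall>x. add m x = x) \<and>
   \<comment> \<open>E2\<close>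
   (\<exists>!u. \<forall>x. mul u x = x) \<and>
   \<comment> \<open>E3 and E4 (E4 refers to the element M of E3)\<close>
   (\<exists>M. (\<forall>x. add (mag add x) M = M) \<and>
        (\<exists>x. mag add x \<noteq> zero_s add \<and> mag add x \<noteq> M)) \<and>
   \<comment> \<open>E5\<close>
   (\<forall>x. \<exists>a. x = add a (mag add x) \<and> mag add a = zero_s add) \<and>
   \<comment> \<open>E6\<close>
   (\<forall>x y. x = mag add x \<and> y = mag add y \<and> le x y \<and> x \<noteq> y \<longrightarrow>
        (\<exists>z. z \<noteq> mag add z \<and> le x z \<and> x \<noteq> z \<and> le z y \<and> z \<noteq> y))"

end

theory Submission
  imports Defs
begin

text \<open>Put u = u(x), E = e(u) and c = 1 + b, so that u = c + E is an idempotent that is not a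
  magnitude. Expanding u u = u with the distributivity axiom shows that c b is absorbed by the
  magnitude N = E c + E, hence c b and -(c b) lie below N. If b or -b lay above E, monotonicity of
  multiplication by the positive one of c and -c would make the magnitude E c equal to a precise
  product, so E c = 0 and N = E. Now c b \<le> E gives b (1 + b) \<le> E, and -(c b) \<le> E together
  with (-b) + c = 1 gives the bound for -b, unless both c and -c are at most E, in which case u
  would be the magnitude E.\<close>

locale solid_structure =
  fixes add :: "'a \<Rightarrow> 'a \<Rightarrow> 'a" (infixl "\<oplus>" 65)
    and mul :: "'a \<Rightarrow> 'a \<Rightarrow> 'a" (infixl "\<otimes>" 70)
    and le :: "'a \<Rightarrow> 'a \<Rightarrow> bool" (infix "\<preceq>" 50)
  assumes solid: "solid add mul le"
begin

abbreviation mag_of ("e") where "e \<equiv> mag add"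
abbreviation neg ("\<ominus> _" [80] 80) where "\<ominus> x \<equiv> neg_s add x"
abbreviation zero_elem ("\<zero>") where "\<zero> \<equiv> zero_s add"
abbreviation one_elem ("\<one>") where "\<one> \<equiv> one_s mul"

lemma add_assoc [rule_format]: "\<forall>x y z. x \<oplus> y \<oplus> z = x \<oplus> (y \<oplus> z)"
  using solid unfolding solid_def by (elim conjE) assumption

lemma add_commute [rule_format]: "\<forall>x y. x \<oplus> y = y \<oplus> x"
  using solid unfolding solid_def by (elim conjE) assumption

lemma mag_ex1 [rule_format]: "\<forall>x. \<exists>!m. x \<oplus> m = x \<and> (\<forall>f. x \<oplus> f = x \<longrightarrow> m \<oplus> f = m)"
  using solid unfolding solid_def by (elim conjE) assumption

lemma neg_ex1 [rule_format]: "\<forall>x. \<exists>!s. x \<oplus> s = e x \<and> e s = e x"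
  using solid unfolding solid_def by (elim conjE) assumption

lemma mag_add_cases [rule_format]: "\<forall>x y. e (x \<oplus> y) = e x \<or> e (x \<oplus> y) = e y"
  using solid unfolding solid_def by (elim conjE) assumption

lemma mul_commute [rule_format]: "\<forall>x y. x \<otimes> y = y \<otimes> x"
  using solid unfolding solid_def by (elim conjE) assumption

lemma unit_ex1 [rule_format]:
  "\<forall>x. x \<noteq> e x \<longrightarrow> (\<exists>!u. x \<otimes> u = x \<and> (\<forall>v. x \<otimes> v = x \<longrightarrow> u \<otimes> v = u))"
  using solid unfolding solid_def by (elim conjE) assumption

lemma ord_antisym [rule_format, unfolded atomize_conjL[symmetric]]: "\<forall>x y. x \<preceq> y \<and> y \<preceq> x \<longrightarrow> x = y"
  using solid unfolding solid_def by (elim conjE) assumption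

lemma ord_trans [rule_format, unfolded atomize_conjL[symmetric]]: "\<forall>x y z. x \<preceq> y \<and> y \<preceq> z \<longrightarrow> x \<preceq> z"
  using solid unfolding solid_def by (elim conjE) assumption

lemma ord_total [rule_format]: "\<forall>x y. x \<preceq> y \<or> y \<preceq> x"
  using solid unfolding solid_def by (elim conjE) assumption

lemma add_right_mono [rule_format]: "\<forall>x y z. x \<preceq> y \<longrightarrow> x \<oplus> z \<preceq> y \<oplus> z"
  using solid unfolding solid_def by (elim conjE) assumption

lemma absorbed_le_mag [rule_format]:
  "\<forall>x y. y \<oplus> e x = e x \<longrightarrow> y \<preceq> e x \<and> \<ominus> y \<preceq> e x"
  using solid unfolding solid_def by (elim conjE) assumption

lemma mul_left_mono [rule_format, unfolded atomize_conjL[symmetric]]: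
  "\<forall>x y z. (e x \<preceq> x \<and> e x \<noteq> x) \<and> y \<preceq> z \<longrightarrow> x \<otimes> y \<preceq> x \<otimes> z"
  using solid unfolding solid_def by (elim conjE) assumption

lemma mag_mul_left_mono [rule_format, unfolded atomize_conjL[symmetric]]:
  "\<forall>x y z. e y \<preceq> y \<and> y \<preceq> z \<longrightarrow> e x \<otimes> y \<preceq> e x \<otimes> z"
  using solid unfolding solid_def by (elim conjE) assumption

lemma mag_mul_ex [rule_format]: "\<forall>x y. \<exists>z. e x \<otimes> y = e z"
  using solid unfolding solid_def by (elim conjE) assumption

lemma mag_mul [rule_format]: "\<forall>x y. e (x \<otimes> y) = e x \<otimes> y \<oplus> e y \<otimes> x"
  using solid unfolding solid_def by (elim conjE) assumption

lemma distrib [rule_format]: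
  "\<forall>x y z. x \<otimes> y \<oplus> x \<otimes> z = x \<otimes> (y \<oplus> z) \<oplus> e x \<otimes> y \<oplus> e x \<otimes> z"
  using solid unfolding solid_def by (elim conjE) assumption

lemma neg_mul_left [rule_format]: "\<forall>x y. \<ominus> (x \<otimes> y) = (\<ominus> x) \<otimes> y"
  using solid unfolding solid_def by (elim conjE) assumption

lemma zero_ex1: "\<exists>!m. \<forall>x. m \<oplus> x = x"
  using solid unfolding solid_def by (elim conjE) assumption

lemma one_ex1: "\<exists>!u. \<forall>x. u \<otimes> x = x"
  using solid unfolding solid_def by (elim conjE) assumption

lemma nonzero_mag_ex: "\<exists>x. e x \<noteq> \<zero>"
proof -
  have "\<exists>M. (\<forall>x. e x \<oplus> M = M) \<and> (\<exists>x. e x \<noteq> \<zero> \<and> e x \<noteq> M)"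
    using solid unfolding solid_def by (elim conjE) assumption
  then show ?thesis by blast
qed

lemma precise_part_ex [rule_format]: "\<forall>x. \<exists>a. x = a \<oplus> e x \<and> e a = \<zero>"
  using solid unfolding solid_def by (elim conjE) assumption

lemma zeroless_between_mags [rule_format, unfolded atomize_conjL[symmetric]]:
  "\<forall>x y. x = e x \<and> y = e y \<and> x \<preceq> y \<and> x \<noteq> y \<longrightarrow>
     (\<exists>z. z \<noteq> e z \<and> x \<preceq> z \<and> x \<noteq> z \<and> z \<preceq> y \<and> z \<noteq> y)"
  using solid unfolding solid_def by (elim conjE) assumption

lemma add_left_commute: "x \<oplus> (y \<oplus> z) = y \<oplus> (x \<oplus> z)"
  by (metis add_assoc add_commute)

lemma zero_add [simp]: "\<zero> \<oplus> x = x"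
  using theI'[OF zero_ex1] unfolding zero_s_def by blast

lemma add_zero [simp]: "x \<oplus> \<zero> = x"
  by (metis zero_add add_commute)

lemma one_mul [simp]: "\<one> \<otimes> x = x"
  using theI'[OF one_ex1] unfolding one_s_def by blast

lemma mul_one [simp]: "x \<otimes> \<one> = x"
  by (metis one_mul mul_commute)

lemma add_mag [simp]: "x \<oplus> e x = x"
  using theI'[OF mag_ex1] unfolding mag_def by blast

lemma mag_absorb: "x \<oplus> y = x \<Longrightarrow> e x \<oplus> y = e x"
  using theI'[OF mag_ex1] unfolding mag_def by blast

lemma mag_add_self [simp]: "e x \<oplus> e x = e x"
  by (rule mag_absorb) simp

lemma mag_mag [simp]: "e (e x) = e x"
  unfolding mag_def[of add "e x"] by (rule the1_equality[OF mag_ex1]) (simp add: mag_absorb)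

lemma mag_zero [simp]: "e \<zero> = \<zero>"
  by (metis add_mag zero_add)

lemma add_neg [simp]: "x \<oplus> \<ominus> x = e x"
  using theI'[OF neg_ex1] unfolding neg_s_def by blast

lemma mag_neg [simp]: "e (\<ominus> x) = e x"
  using theI'[OF neg_ex1] unfolding neg_s_def by blast

lemma neg_unique: "x \<oplus> y = e x \<Longrightarrow> e y = e x \<Longrightarrow> \<ominus> x = y"
  using the1_equality[OF neg_ex1] unfolding neg_s_def by blast

lemma neg_mag [simp]: "\<ominus> e x = e x"
  by (rule neg_unique) simp_all

lemma neg_neg [simp]: "\<ominus> \<ominus> x = x"
  by (rule neg_unique) (simp_all add: add_commute)

lemma mul_neg_left: "\<ominus> x \<otimes> y = \<ominus> (x \<otimes> y)"
  by (rule neg_mul_left[symmetric])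

lemma mul_neg_right: "x \<otimes> \<ominus> y = \<ominus> (x \<otimes> y)"
  by (metis neg_mul_left mul_commute)

lemma zero_le_mag: "\<zero> \<preceq> e x"
  using absorbed_le_mag[of \<zero> x] by simp

lemma mag_add_mag:
  assumes "e m = m" "e n = n"
  shows "e (m \<oplus> n) = m \<oplus> n"
proof -
  have "m \<oplus> n \<oplus> n = m \<oplus> n" "m \<oplus> n \<oplus> m = m \<oplus> n"
    using assms mag_add_self add_assoc add_commute by metis+
  then have "e (m \<oplus> n) \<oplus> n = e (m \<oplus> n)" "e (m \<oplus> n) \<oplus> m = e (m \<oplus> n)"
    by (simp_all add: mag_absorb)
  moreover have "e (m \<oplus> n) = m \<or> e (m \<oplus> n) = n"
    using mag_add_cases assms by metis
  ultimately show ?thesis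
    by (metis add_commute)
qed

lemma mag_add_mag_cases: "e m = m \<Longrightarrow> e n = n \<Longrightarrow> m \<oplus> n = m \<or> m \<oplus> n = n"
  by (metis mag_add_mag mag_add_cases)

lemma mag_precise_add:
  assumes "e c = \<zero>"
  shows "e (c \<oplus> e y) = e y"
proof -
  have "e (c \<oplus> e y) \<oplus> e y = e (c \<oplus> e y)"
    by (rule mag_absorb) (simp add: add_assoc)
  moreover have "e (c \<oplus> e y) = \<zero> \<or> e (c \<oplus> e y) = e y"
    using mag_add_cases assms by (metis mag_mag)
  ultimately show ?thesis
    by auto
qed

lemma neg_precise_add:
  assumes "e c = \<zero>"
  shows "\<ominus> (c \<oplus> e y) = \<ominus> c \<oplus> e y"
proof (rule neg_unique)
  have "c \<oplus> e y \<oplus> (\<ominus> c \<oplus> e y) = c \<oplus> \<ominus> c \<oplus> (e y \<oplus> e y)"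
    by (simp only: add_assoc add_left_commute)
  then show "c \<oplus> e y \<oplus> (\<ominus> c \<oplus> e y) = e (c \<oplus> e y)"
    using assms by (simp add: mag_precise_add)
  show "e (\<ominus> c \<oplus> e y) = e (c \<oplus> e y)"
    using assms by (simp add: mag_precise_add)
qed

lemma precise_add_cancel:
  assumes "e c = \<zero>" and "c \<oplus> y = c \<oplus> z"
  shows "y = z"
proof -
  have "\<ominus> c \<oplus> (c \<oplus> y) = \<ominus> c \<oplus> (c \<oplus> z)"
    using assms(2) by simp
  then show ?thesis
    using assms(1) by (simp add: add_assoc[symmetric] add_commute[of "\<ominus> c"])
qed

lemma mag_mul_mag [simp]: "e (e x \<otimes> y) = e x \<otimes> y"
  using mag_mul_ex[of x y] by auto

lemma mag_le_neg_if_le_mag: "y \<preceq> e y \<Longrightarrow> e y \<preceq> \<ominus> y"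
  using add_right_mono[of y "e y" "\<ominus> y"] add_mag[of "\<ominus> y"] by (simp add: add_commute)

lemma eq_mag_if_abs_le:
  assumes "y \<preceq> e y" and "\<ominus> y \<preceq> e y"
  shows "y = e y"
proof -
  have "\<ominus> y = e y"
    using mag_le_neg_if_le_mag[OF assms(1)] assms(2) by (simp add: ord_antisym)
  then show ?thesis
    by (metis neg_neg neg_mag)
qed

lemma add_le_mag:
  assumes "e m = m" "y \<preceq> m" "z \<preceq> m"
  shows "y \<oplus> z \<preceq> m"
proof -
  have "y \<oplus> z \<preceq> m \<oplus> z" "z \<oplus> m \<preceq> m \<oplus> m"
    using assms(2,3) by (simp_all add: add_right_mono)
  then show ?thesis
    using assms(1) mag_add_self[of m] by (metis add_commute ord_trans)
qed

lemma one_zeroless: "\<one> \<noteq> e \<one>"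
proof
  assume one: "\<one> = e \<one>"
  have all_mag: "e y = y" for y
    using mag_mul[of \<one> y] by (simp flip: one)
  obtain x where "e x \<noteq> \<zero>"
    using nonzero_mag_ex by blast
  then obtain z where "z \<noteq> e z"
    using zeroless_between_mags[of \<zero> "e x"] zero_le_mag by auto
  then show False
    using all_mag by simp
qed

lemma mag_one_le_one: "e \<one> \<preceq> \<one>"
proof (rule ccontr)
  assume "\<not> e \<one> \<preceq> \<one>"
  then have le: "\<one> \<preceq> e \<one>"
    using ord_total by blast
  then have neg_ge: "e \<one> \<preceq> \<ominus> \<one>"
    by (rule mag_le_neg_if_le_mag)
  have "\<ominus> \<one> \<noteq> e \<one>"
    using one_zeroless by (metis neg_neg neg_mag)
  then have "\<ominus> \<one> \<otimes> \<one> \<preceq> \<ominus> \<one> \<otimes> e \<one>"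
    using mul_left_mono[of "\<ominus> \<one>" \<one> "e \<one>"] neg_ge le by simp
  then have "\<ominus> \<one> \<preceq> e \<one>"
    by (simp add: mul_neg_left)
  then show False
    using eq_mag_if_abs_le[OF le] one_zeroless by blast
qed

lemma mag_one [simp]: "e \<one> = \<zero>"
proof -
  obtain a where a: "\<one> = a \<oplus> e \<one>" "e a = \<zero>"
    using precise_part_ex by blast
  have "e \<one> \<preceq> a"
  proof (rule ccontr)
    assume "\<not> e \<one> \<preceq> a"
    then have "a \<oplus> e \<one> \<preceq> e \<one> \<oplus> e \<one>"
      using ord_total add_right_mono by blast
    then have "\<one> \<preceq> e \<one>"
      using a by simp
    then show False
      using mag_one_le_one one_zeroless ord_antisym by blast
  qed
  then have "e \<one> \<oplus> a \<preceq> a \<oplus> a"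
    by (rule add_right_mono)
  then have "\<one> \<preceq> a \<oplus> a"
    using a add_commute by metis
  then have "e \<one> \<otimes> \<one> \<preceq> e \<one> \<otimes> (a \<oplus> a)"
    using mag_mul_left_mono mag_one_le_one by blast
  moreover have "e \<one> \<otimes> (a \<oplus> a) = \<zero>"
    using mag_mul[of \<one> "a \<oplus> a"] mag_add_cases[of a a] a(2) by auto
  ultimately show ?thesis
    using zero_le_mag ord_antisym by (metis mul_one)
qed

lemma zero_mul_precise: "e p = \<zero> \<Longrightarrow> \<zero> \<otimes> p = \<zero>"
  using mag_mul[of \<one> p] by simp

lemma zero_mul_add_mag [simp]: "\<zero> \<otimes> e y \<oplus> e y = e y"
  using mag_mul[of \<one> "e y"] by simp

lemma mag_mul_precise: "e p = \<zero> \<Longrightarrow> e q = \<zero> \<Longrightarrow> e (p \<otimes> q) = \<zero>"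
  using mag_mul[of p q] by (simp add: zero_mul_precise)

lemma distrib_precise:
  "e p = \<zero> \<Longrightarrow> e y = \<zero> \<Longrightarrow> e z = \<zero> \<Longrightarrow> p \<otimes> (y \<oplus> z) = p \<otimes> y \<oplus> p \<otimes> z"
  using distrib[of p y z] by (simp add: zero_mul_precise)

lemma mul_left_mono_precise:
  assumes "e p = \<zero>" "\<zero> \<preceq> p" "p \<noteq> \<zero>" "y \<preceq> z"
  shows "p \<otimes> y \<preceq> p \<otimes> z"
  using assms mul_left_mono[of p y z] by simp

lemma one_le_one_add: "\<zero> \<preceq> q \<Longrightarrow> \<one> \<preceq> \<one> \<oplus> q"
  using add_right_mono[of \<zero> q \<one>] by (simp add: add_commute)

lemma le_mag_if_mul_le:
  assumes p: "e p = \<zero>" and m: "e m = m" and "\<one> \<preceq> z" "p \<otimes> z \<preceq> m"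
  shows "p \<preceq> m"
proof (rule ccontr)
  assume not_le: "\<not> p \<preceq> m"
  then have "m \<preceq> p"
    using ord_total by blast
  then have "\<zero> \<preceq> p"
    using zero_le_mag[of m] m ord_trans by simp
  moreover have "p \<noteq> \<zero>"
    using not_le zero_le_mag[of m] m by auto
  ultimately have "p \<otimes> \<one> \<preceq> p \<otimes> z"
    using mul_left_mono_precise p \<open>\<one> \<preceq> z\<close> by blast
  then have "p \<preceq> m"
    using \<open>p \<otimes> z \<preceq> m\<close> ord_trans by simp
  then show False
    using not_le by contradiction
qed

lemma le_mag_if_mul_one_add_le:
  assumes q: "e q = \<zero>" and m: "e m = m" and le: "q \<otimes> (\<one> \<oplus> q) \<preceq> m"
  shows "q \<preceq> m"
proof (cases "\<zero> \<preceq> q")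
  case True
  then show ?thesis
    using le_mag_if_mul_le[OF q m one_le_one_add le] by blast
next
  case False
  then have "q \<preceq> \<zero>"
    using ord_total by blast
  then show ?thesis
    using ord_trans zero_le_mag[of m] m by auto
qed

lemma le_mag_if_add_eq_one:
  assumes p: "e p = \<zero>" and q: "e q = \<zero>" and m: "e m = m"
    and "p \<preceq> q" "p \<oplus> q = \<one>" "p \<otimes> q \<preceq> m"
  shows "p \<preceq> m"
proof (rule le_mag_if_mul_le[OF p m])
  have "p \<oplus> q \<preceq> q \<oplus> q"
    using \<open>p \<preceq> q\<close> by (rule add_right_mono)
  then show "\<one> \<preceq> q \<oplus> q"
    using \<open>p \<oplus> q = \<one>\<close> by simp
  show "p \<otimes> (q \<oplus> q) \<preceq> m"
    using distrib_precise[OF p q q] add_le_mag[OF m] \<open>p \<otimes> q \<preceq> m\<close> by simp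
qed

lemma mul_mag_eq_zero:
  assumes t: "e t = \<zero>" "\<zero> \<preceq> t" "t \<noteq> \<zero>" and s: "e s = \<zero>" "m \<preceq> s"
    and m: "e m = m" and le: "t \<otimes> s \<preceq> t \<otimes> m"
  shows "t \<otimes> m = \<zero>"
proof -
  have "t \<otimes> m \<preceq> t \<otimes> s"
    using mul_left_mono_precise t s(2) by blast
  then have "t \<otimes> m = t \<otimes> s"
    using le ord_antisym by blast
  moreover have "e (t \<otimes> m) = t \<otimes> m"
    using mag_mul_mag[of m t] m by (simp add: mul_commute)
  ultimately show ?thesis
    using mag_mul_precise[OF t(1) s(1)] by simp
qed

lemma mul_unit: "x \<noteq> e x \<Longrightarrow> x \<otimes> unit_s mul x = x"
  using theI'[OF unit_ex1] unfolding unit_s_def by blast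

lemma unit_idempotent: "x \<noteq> e x \<Longrightarrow> unit_s mul x \<otimes> unit_s mul x = unit_s mul x"
  using theI'[OF unit_ex1] mul_unit unfolding unit_s_def by blast

lemma unit_zeroless:
  assumes "x \<noteq> e x"
  shows "unit_s mul x \<noteq> e (unit_s mul x)"
proof
  assume "unit_s mul x = e (unit_s mul x)"
  then have "x = e (unit_s mul x) \<otimes> x"
    using mul_unit[OF assms] by (metis mul_commute)
  then have "e x = x"
    by (metis mag_mul_mag)
  then show False
    using assms by simp
qed

lemma mag_mul_idempotent:
  assumes "u \<otimes> u = u"
  shows "e u \<otimes> u = e u"
  using mag_mul[of u u] mag_mul_mag[of u u] mag_add_self[of "e u \<otimes> u"] assms by metis

lemma idempotent_precise_part_square:
  assumes uu: "u \<otimes> u = u" and c: "e c = \<zero>" and u: "u = c \<oplus> e u"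
  shows "c \<otimes> c \<oplus> (e u \<otimes> c \<oplus> e u) = c \<oplus> (e u \<otimes> c \<oplus> e u)"
proof -
  let ?E = "e u" and ?K = "e u \<otimes> c"
  have Eu: "?E \<otimes> u = ?E"
    using mag_mul_idempotent[OF uu] .
  have EE: "?E \<oplus> ?E \<otimes> ?E = ?E"
    using mag_mul[of ?E u] Eu by (simp add: mul_commute)
  have uc: "u \<otimes> c \<oplus> ?E = u \<oplus> ?K \<oplus> ?E \<otimes> ?E"
    using distrib[of u c ?E] u[symmetric] uu Eu by (simp add: mul_commute)
  have "c \<otimes> c \<oplus> c \<otimes> ?E = c \<otimes> u \<oplus> \<zero> \<otimes> ?E"
    using distrib[of c c ?E] u[symmetric] c zero_mul_precise[OF c] by simp
  then have cc: "c \<otimes> c \<oplus> ?K = u \<otimes> c \<oplus> \<zero> \<otimes> ?E"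
    by (simp only: mul_commute[of c "e u"] mul_commute[of c u])
  have "c \<otimes> c \<oplus> (?K \<oplus> ?E) = u \<otimes> c \<oplus> \<zero> \<otimes> ?E \<oplus> ?E"
    using cc by (simp only: add_assoc[symmetric])
  also have "\<dots> = u \<otimes> c \<oplus> ?E"
    by (simp add: add_assoc)
  also have "\<dots> = c \<oplus> ?E \<oplus> ?K \<oplus> ?E \<otimes> ?E"
    using uc u by simp
  also have "\<dots> = c \<oplus> (?K \<oplus> (?E \<oplus> ?E \<otimes> ?E))"
    by (simp only: add_assoc add_left_commute)
  also have "\<dots> = c \<oplus> (?K \<oplus> ?E)"
    using EE by simp
  finally show ?thesis .
qed

lemma mag_mul_add_mag_eq_mag:
  assumes m: "e m = m" and c: "e c = \<zero>" and s: "e s = \<zero>" "m \<preceq> s"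
    and le: "c \<otimes> s \<preceq> m \<otimes> c \<oplus> m" "\<ominus> (c \<otimes> s) \<preceq> m \<otimes> c \<oplus> m"
  shows "m \<otimes> c \<oplus> m = m"
proof (rule ccontr)
  let ?K = "m \<otimes> c"
  assume ne: "?K \<oplus> m \<noteq> m"
  have K: "e ?K = ?K"
    using mag_mul_mag[of m c] m by simp
  have N: "?K \<oplus> m = ?K"
    using mag_add_mag_cases[OF K m] ne by blast
  have "c \<noteq> \<zero>"
    using ne zero_mul_add_mag[of m] m by (auto simp: mul_commute)
  obtain t where t: "e t = \<zero>" "\<zero> \<preceq> t" "t \<noteq> \<zero>" "t \<otimes> m = ?K" "t \<otimes> s \<preceq> ?K"
  proof (cases "\<zero> \<preceq> c")
    case True
    then show ?thesis
      using that[of c] c \<open>c \<noteq> \<zero>\<close> le(1) N by (simp add: mul_commute)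
  next
    case False
    then have "c \<oplus> \<ominus> c \<preceq> \<zero> \<oplus> \<ominus> c"
      using ord_total add_right_mono by blast
    then have pos: "\<zero> \<preceq> \<ominus> c"
      using c by simp
    have nonzero: "\<ominus> c \<noteq> \<zero>"
      using \<open>c \<noteq> \<zero>\<close> by (metis neg_neg neg_mag mag_zero)
    have "\<ominus> c \<otimes> m = \<ominus> ?K"
      by (simp add: mul_neg_left mul_commute[of c m])
    also have "\<dots> = ?K"
      using neg_mag[of ?K] K by simp
    finally have "\<ominus> c \<otimes> m = ?K" .
    moreover have "\<ominus> c \<otimes> s \<preceq> ?K"
      using le(2) N by (simp add: mul_neg_left)
    ultimately show ?thesis
      using that[of "\<ominus> c"] c pos nonzero by simp
  qed
  then have "?K = \<zero>"
    using mul_mag_eq_zero[OF t(1-3) s m] by simp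
  then show False
    using ne by simp
qed

lemma abs_le_mag_if_mul_abs_le:
  assumes m: "e m = m" and b: "e b = \<zero>" and c: "c = \<one> \<oplus> b"
    and zeroless: "c \<oplus> m \<noteq> m" and le: "c \<otimes> b \<preceq> m" "\<ominus> (c \<otimes> b) \<preceq> m"
  shows "b \<preceq> m \<and> \<ominus> b \<preceq> m"
proof
  have ec: "e c = \<zero>"
    using mag_add_cases[of \<one> b] b c by auto
  show "b \<preceq> m"
    using le_mag_if_mul_one_add_le[OF b m] le(1) c by (simp add: mul_commute)
  have cs: "c \<oplus> \<ominus> b = \<one>"
    using b c by (simp add: add_assoc)
  have s: "\<ominus> b = \<one> \<oplus> \<ominus> c"
    using cs ec by (metis add_assoc add_commute add_neg zero_add)
  have sc: "\<ominus> b \<otimes> c \<preceq> m"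
    using le(2) neg_mul_left[of b c] by (simp add: mul_commute)
  have "\<ominus> c \<preceq> m"
  proof (rule le_mag_if_mul_one_add_le[OF _ m])
    show "e (\<ominus> c) = \<zero>"
      using ec by simp
    have "\<ominus> c \<otimes> \<ominus> b = c \<otimes> b"
      by (simp add: mul_neg_left mul_neg_right)
    then show "\<ominus> c \<otimes> (\<one> \<oplus> \<ominus> c) \<preceq> m"
      using le(1) s by simp
  qed
  have "\<not> c \<preceq> m"
  proof
    assume "c \<preceq> m"
    then have "c \<oplus> m \<preceq> m"
      using add_right_mono[of c m m] m mag_add_self[of m] by simp
    moreover have "\<ominus> (c \<oplus> m) \<preceq> m"
      using add_right_mono[OF \<open>\<ominus> c \<preceq> m\<close>, of m] neg_precise_add[OF ec, of m] m mag_add_self[of m]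
      by simp
    moreover have "e (c \<oplus> m) = m"
      using mag_precise_add[OF ec, of m] m by simp
    ultimately show False
      using eq_mag_if_abs_le[of "c \<oplus> m"] zeroless by simp
  qed
  show "\<ominus> b \<preceq> m"
  proof (cases "\<ominus> b \<preceq> c")
    case True
    then show ?thesis
      using le_mag_if_add_eq_one[OF _ ec m True _ sc] b cs by (simp add: add_commute)
  next
    case False
    then have "c \<preceq> \<ominus> b"
      using ord_total by blast
    then have "c \<preceq> m"
      using le_mag_if_add_eq_one[OF ec _ m _ cs] b sc by (simp add: mul_commute)
    then show ?thesis
      using \<open>\<not> c \<preceq> m\<close> by contradiction
  qed
qed

lemma abs_le_mag_if_idempotent:
  assumes uu: "u \<otimes> u = u" and zeroless: "u \<noteq> e u"
    and b: "e b = \<zero>" and u: "u = \<one> \<oplus> b \<oplus> e u"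
  shows "b \<preceq> e u \<and> \<ominus> b \<preceq> e u"
proof -
  define c where "c = \<one> \<oplus> b"
  define N where "N = e u \<otimes> c \<oplus> e u"
  have c: "e c = \<zero>"
    using mag_add_cases[of \<one> b] b unfolding c_def by auto
  have N: "e N = N"
    unfolding N_def using mag_add_mag[of "e u \<otimes> c" "e u"] by simp
  have "c \<oplus> c \<otimes> b \<oplus> N = c \<oplus> N"
    using idempotent_precise_part_square[OF uu c] u distrib_precise[OF c _ b, of \<one>]
    unfolding N_def c_def by simp
  then have "c \<otimes> b \<oplus> N = N"
    using precise_add_cancel[OF c] by (simp add: add_assoc)
  then have cb: "c \<otimes> b \<preceq> N" "\<ominus> (c \<otimes> b) \<preceq> N"
    using absorbed_le_mag[of "c \<otimes> b" N] N by simp_all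
  show ?thesis
  proof (rule ccontr)
    assume not_le: "\<not> (b \<preceq> e u \<and> \<ominus> b \<preceq> e u)"
    then obtain s where s: "s = b \<or> s = \<ominus> b" "e u \<preceq> s"
      using ord_total by blast
    have "c \<otimes> s \<preceq> N \<and> \<ominus> (c \<otimes> s) \<preceq> N"
      using s(1) cb by (auto simp: mul_neg_right)
    then have "N = e u"
      using mag_mul_add_mag_eq_mag[of "e u" c s] c s b unfolding N_def by auto
    moreover have "c \<oplus> e u \<noteq> e u"
      using zeroless u unfolding c_def by metis
    ultimately show False
      using abs_le_mag_if_mul_abs_le[OF _ b c_def] cb not_le by simp
  qed
qed

end

theorem mainTheorem11:
  fixes add mul :: "'a \<Rightarrow> 'a \<Rightarrow> 'a" and le :: "'a \<Rightarrow> 'a \<Rightarrow> bool" and x a b :: 'a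
  assumes "solid add mul le"
    and "x \<noteq> mag add x"
    and "x = add a (mag add x)" and "mag add a = zero_s add"
    and "mag add b = zero_s add"
    and "unit_s mul x = add (add (one_s mul) b) (mag add (unit_s mul x))"
  shows "le (abs_s add le b) (mag add (unit_s mul x))"
proof -
  interpret solid_structure add mul le
    by (rule solid_structure.intro) fact
  have "le b (mag add (unit_s mul x)) \<and> le (neg_s add b) (mag add (unit_s mul x))"
    using abs_le_mag_if_idempotent[OF unit_idempotent unit_zeroless] assms(2,5,6) by blast
  then show ?thesis
    unfolding abs_s_def by simp
qed

end
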